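(* For all real $y\ge2$ and all $n\ge1$, $|P_n(y)|\le 3\cdot n!\,y^n$; moreover $|P_0(y)|\le y$ for $y\ge2$.
   Context: The polynomials $P_n(y)$ are defined by $P_0(y)=y-1$ and, for $n\ge1$, $P_n=nP_{n-1}-P'_{n-1}+\frac{1}{n}\sum_{k=1}^{n-1}k\{(k-1)P_{k-1}-P_k-P'_{k-1}\}P_{n-k-1}$, primes denoting derivatives in $y$ (equivalently, $1+\sum_{n\ge1}P_{n-1}(y)x^{-n}$ is the unique formal solution of $V=1+\frac{y}{x}-\frac{1}{x}V-V_x-\frac{1}{x}V_y+\frac{1}{x}\log V$). *)

theory Defs
  imports "HOL-Computational_Algebra.Polynomial"
begin

definition P_step :: "real poly list \<Rightarrow> nat \<Rightarrow> real poly" where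
  "P_step ps n =
     smult (of_nat n) (ps ! (n - 1)) - pderiv (ps ! (n - 1))
     + smult (1 / of_nat n)
         (\<Sum>k = 1..n - 1. smult (of_nat k)
             (smult (of_nat (k - 1)) (ps ! (k - 1)) - ps ! k - pderiv (ps ! (k - 1)))
             * ps ! (n - k - 1))"

fun P_list :: "nat \<Rightarrow> real poly list" where
  "P_list 0 = [[:-1, 1:]]"
| "P_list (Suc m) = P_list m @ [P_step (P_list m) (Suc m)]"

definition P :: "nat \<Rightarrow> real poly" where
  "P n = P_list n ! n"

end

theory Submission
  imports Defs
begin

text \<open>For \<open>y \<ge> 0\<close> let \<open>M(p)\<close> be \<open>p\<close> with all coefficients replaced by their absolute values,
  evaluated at \<open>y\<close>. It bounds \<open>\<bar>p(y)\<bar>\<close>, is subadditive and submultiplicative, and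
  \<open>y M(p') \<le> deg p \<cdot> M(p)\<close>. Applied to the recursion for \<open>P\<^sub>n\<close> and to its derivative this yields a
  closed system of recursive inequalities for \<open>M(P\<^sub>n)\<close> and \<open>y M(P\<^sub>n')\<close>. We show by induction that
  these are at most \<open>n! y\<^sup>n a\<^sub>n\<close> and \<open>n! y\<^sup>n b\<^sub>n\<close> for a fixed certificate \<open>(a, b)\<close> with
  \<open>a\<^sub>n \<le> 5/2\<close>. With these bounds substituted every term of the recursion has \<open>y\<close>-degree at most
  \<open>n\<close>, so the induction step only has to be checked at \<open>y = 2\<close>: by exact computation for \<open>n < 20\<close>,
  and for larger \<open>n\<close> by the estimate \<open>\<Sum>\<^sub>k k\<cdot>k!(n-1-k)! \<le> 4(n-1)!\<close>, which makes the convolution terms negligible.\<close>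

definition majorant :: "real poly \<Rightarrow> real \<Rightarrow> real" where
  "majorant p y = poly (map_poly abs p) y"

lemma coeff_map_poly_abs [simp]: "coeff (map_poly abs p) n = (\<bar>coeff p n\<bar> :: real)"
  by (rule coeff_map_poly) simp

lemma poly_le_poly_if_coeff_le:
  fixes p q :: "real poly"
  assumes "\<And>n. coeff p n \<le> coeff q n" and "y \<ge> 0"
  shows "poly p y \<le> poly q y"
proof -
  have "0 \<le> poly (q - p) y"
    unfolding poly_altdef using assms by (intro sum_nonneg) auto
  then show ?thesis
    by simp
qed

lemma majorant_nonneg: "y \<ge> 0 \<Longrightarrow> majorant p y \<ge> 0"
  unfolding majorant_def poly_altdef by (intro sum_nonneg) auto

lemma abs_poly_le_majorant:
  assumes "y \<ge> 0"
  shows "\<bar>poly p y\<bar> \<le> majorant p y"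
proof -
  have "\<bar>poly p y\<bar> \<le> (\<Sum>i\<le>degree p. \<bar>coeff p i * y ^ i\<bar>)"
    unfolding poly_altdef by (rule sum_abs)
  also have "\<dots> = majorant p y"
    using assms by (simp add: majorant_def poly_altdef degree_map_poly abs_mult)
  finally show ?thesis .
qed

lemma majorant_0 [simp]: "majorant 0 y = 0"
  by (simp add: majorant_def)

lemma majorant_pCons: "majorant (pCons a p) y = \<bar>a\<bar> + y * majorant p y"
proof -
  have "map_poly abs (pCons a p) = pCons \<bar>a\<bar> (map_poly abs p)"
    by (rule poly_eqI) (simp add: coeff_pCons split: nat.split)
  then show ?thesis
    by (simp add: majorant_def)
qed

lemma majorant_uminus [simp]: "majorant (- p) y = majorant p y"
  unfolding majorant_def by (rule arg_cong[of _ _ "\<lambda>q. poly q y"]) (rule poly_eqI, simp)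

lemma majorant_smult [simp]: "majorant (smult c p) y = \<bar>c\<bar> * majorant p y"
proof -
  have "map_poly abs (smult c p) = smult \<bar>c\<bar> (map_poly abs p)"
    by (rule poly_eqI) (simp add: abs_mult)
  then show ?thesis
    by (simp add: majorant_def)
qed

lemma majorant_add: "y \<ge> 0 \<Longrightarrow> majorant (p + q) y \<le> majorant p y + majorant q y"
  unfolding majorant_def poly_add[symmetric]
  by (rule poly_le_poly_if_coeff_le) (auto simp: abs_triangle_ineq)

lemma majorant_diff: "y \<ge> 0 \<Longrightarrow> majorant (p - q) y \<le> majorant p y + majorant q y"
  using majorant_add[of y p "- q"] by simp

lemma majorant_sum:
  assumes "y \<ge> 0"
  shows "majorant (\<Sum>k\<in>S. f k) y \<le> (\<Sum>k\<in>S. majorant (f k) y)"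
proof (induction S rule: infinite_finite_induct)
  case (insert x S)
  then show ?case
    using majorant_add[OF assms, of "f x" "sum f S"] by simp
qed simp_all

lemma majorant_mult:
  assumes "y \<ge> 0"
  shows "majorant (p * q) y \<le> majorant p y * majorant q y"
proof -
  have "coeff (map_poly abs (p * q)) n \<le> coeff (map_poly abs p * map_poly abs q) n" for n
  proof -
    have "\<bar>coeff (p * q) n\<bar> \<le> (\<Sum>i\<le>n. \<bar>coeff p i * coeff q (n - i)\<bar>)"
      unfolding coeff_mult by (rule sum_abs)
    then show ?thesis
      by (simp add: coeff_mult abs_mult)
  qed
  then show ?thesis
    unfolding majorant_def poly_mult[symmetric] using assms by (rule poly_le_poly_if_coeff_le)
qed

text \<open>Multiplying by \<open>y\<close> and differentiating multiplies the \<open>i\<close>-th coefficient by \<open>i \<le> degree p\<close>.\<close>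
lemma majorant_pderiv:
  assumes "y \<ge> 0"
  shows "y * majorant (pderiv p) y \<le> real (degree p) * majorant p y"
proof -
  have "coeff (pCons 0 (map_poly abs (pderiv p))) n \<le> coeff (smult (real (degree p)) (map_poly abs p)) n"
    for n
  proof (cases n)
    case (Suc m)
    then show ?thesis
      by (cases "n \<le> degree p")
         (auto simp: coeff_pderiv abs_mult coeff_eq_0 intro!: mult_right_mono)
  qed simp
  then have "poly (pCons 0 (map_poly abs (pderiv p))) y
      \<le> poly (smult (real (degree p)) (map_poly abs p)) y"
    using assms by (rule poly_le_poly_if_coeff_le)
  then show ?thesis
    by (simp add: majorant_def)
qed

lemma majorant_pderiv_mult:
  assumes "y \<ge> 0"
  shows "y * majorant (pderiv (p * q)) y
    \<le> y * majorant (pderiv p) y * majorant q y + majorant p y * (y * majorant (pderiv q) y)"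
proof -
  have "majorant (pderiv (p * q)) y \<le> majorant p y * majorant (pderiv q) y + majorant q y * majorant (pderiv p) y"
    unfolding pderiv_mult using assms
    by (intro order.trans[OF majorant_add] add_mono majorant_mult)
  then show ?thesis
    using assms by (auto simp: algebra_simps dest: mult_left_mono[of _ _ y])
qed

lemma length_P_list [simp]: "length (P_list n) = Suc n"
  by (induction n) auto

lemma nth_P_list: "j \<le> n \<Longrightarrow> P_list n ! j = P j"
proof (induction n)
  case (Suc n)
  then show ?case
    by (cases "j \<le> n") (auto simp: nth_append P_def le_Suc_eq)
qed (simp add: P_def)

lemma P_0: "P 0 = [:-1, 1:]"
  by (simp add: P_def)

definition Q :: "nat \<Rightarrow> real poly" where
  "Q k = smult (of_nat (k - 1)) (P (k - 1)) - P k - pderiv (P (k - 1))"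

lemma P_rec:
  assumes "n \<ge> 1"
  shows "P n = smult (of_nat n) (P (n - 1)) - pderiv (P (n - 1))
    + smult (1 / of_nat n) (\<Sum>k = 1..n - 1. smult (of_nat k) (Q k) * P (n - k - 1))"
proof -
  obtain m where m: "n = Suc m"
    using assms by (cases n) auto
  have "P n = P_step (P_list m) n"
    by (simp add: P_def m nth_append)
  then show ?thesis
    unfolding P_step_def Q_def m
    by (auto simp: nth_P_list intro!: arg_cong2[where f = "(+)"] arg_cong2[where f = smult] sum.cong)
qed

lemma degree_P: "degree (P n) \<le> max n 1"
proof (induction n rule: less_induct)
  case (less n)
  show ?case
  proof (cases "n = 0")
    case False
    have deg_le: "degree (P j) \<le> k" if "j < n" "j \<le> k" "1 \<le> k" for j k
      using less[OF \<open>j < n\<close>] that by simp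
    have "degree (smult (of_nat k) (Q k) * P (n - k - 1)) \<le> n" if "k \<in> {1..n - 1}" for k
    proof -
      have "degree (P (k - 1)) \<le> k" "degree (P k) \<le> k"
        using that deg_le[of "k - 1" k] deg_le[of k k] by auto
      then have "degree (Q k) \<le> k" unfolding Q_def
        by (intro degree_diff_le order.trans[OF degree_smult_le]) (auto simp: degree_pderiv le_diff_conv)
      moreover have "degree (P (n - k - 1)) \<le> n - k"
        using that deg_le[of "n - k - 1" "n - k"] by auto
      ultimately show ?thesis
        using that by (intro order.trans[OF degree_mult_le] order.trans[OF add_mono[OF degree_smult_le]])
          auto
    qed
    moreover have "n \<ge> 1"
      using False by simp
    ultimately have "degree (P n) \<le> n"
      unfolding P_rec[OF \<open>n \<ge> 1\<close>] using deg_le[of "n - 1" n]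
      by (intro degree_add_le degree_diff_le order.trans[OF degree_smult_le] degree_sum_le)
         (auto simp: degree_pderiv)
    then show ?thesis
      by simp
  qed (simp add: P_0)
qed

definition maj :: "real \<Rightarrow> nat \<Rightarrow> real" where
  "maj y j = majorant (P j) y"

definition dmaj :: "real \<Rightarrow> nat \<Rightarrow> real" where
  "dmaj y j = y * majorant (pderiv (P j)) y"

lemma maj_nonneg: "y \<ge> 0 \<Longrightarrow> maj y j \<ge> 0"
  by (simp add: maj_def majorant_nonneg)

lemma dmaj_nonneg: "y \<ge> 0 \<Longrightarrow> dmaj y j \<ge> 0"
  by (simp add: dmaj_def majorant_nonneg)

lemma majorant_second_pderiv_P:
  assumes "y > 0"
  shows "y * majorant (pderiv (pderiv (P j))) y \<le> real (j - 1) * dmaj y j / y"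
proof -
  have "y * (y * majorant (pderiv (pderiv (P j))) y) \<le> y * (real (degree (pderiv (P j))) * majorant (pderiv (P j)) y)"
    using assms by (intro mult_left_mono majorant_pderiv) auto
  also have "\<dots> \<le> real (j - 1) * dmaj y j"
  proof -
    have "degree (pderiv (P j)) \<le> j - 1"
      using degree_P[of j] by (simp add: degree_pderiv)
    then show ?thesis
      using assms by (auto simp: dmaj_def intro!: mult_right_mono majorant_nonneg)
  qed
  finally show ?thesis
    using assms by (simp add: field_simps)
qed

text \<open>With \<open>a j\<close> and \<open>b j\<close> standing for \<open>maj y j\<close> and \<open>dmaj y j\<close>, \<open>Qbound\<close> and \<open>dQbound\<close> majorize
  \<open>Q k\<close> and \<open>y Q'\<^sub>k\<close>, and \<open>Pbound\<close> and \<open>dPbound\<close> the right-hand sides of the recursions for \<open>P n\<close> and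
  \<open>y P'\<^sub>n\<close>.\<close>

definition Qbound :: "real \<Rightarrow> (nat \<Rightarrow> real) \<Rightarrow> (nat \<Rightarrow> real) \<Rightarrow> nat \<Rightarrow> real" where
  "Qbound y a b k = real (k - 1) * a (k - 1) + a k + b (k - 1) / y"

definition dQbound :: "real \<Rightarrow> (nat \<Rightarrow> real) \<Rightarrow> nat \<Rightarrow> real" where
  "dQbound y b k = real (k - 1) * b (k - 1) + b k + real (k - 2) * b (k - 1) / y"

definition Pbound :: "real \<Rightarrow> (nat \<Rightarrow> real) \<Rightarrow> (nat \<Rightarrow> real) \<Rightarrow> nat \<Rightarrow> real" where
  "Pbound y a b n = real n * a (n - 1) + b (n - 1) / y
     + (\<Sum>k = 1..n - 1. real k * Qbound y a b k * a (n - k - 1)) / real n"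

definition dPbound :: "real \<Rightarrow> (nat \<Rightarrow> real) \<Rightarrow> (nat \<Rightarrow> real) \<Rightarrow> nat \<Rightarrow> real" where
  "dPbound y a b n = real n * b (n - 1) + real (n - 2) * b (n - 1) / y
     + (\<Sum>k = 1..n - 1. real k * (dQbound y b k * a (n - k - 1) + Qbound y a b k * b (n - k - 1)))
       / real n"

lemma majorant_Q:
  assumes "y > 0"
  shows "majorant (Q k) y \<le> Qbound y (maj y) (dmaj y) k"
proof -
  have "majorant (Q k) y \<le> majorant (smult (of_nat (k - 1)) (P (k - 1))) y + majorant (P k) y
      + majorant (pderiv (P (k - 1))) y"
    unfolding Q_def using assms by (intro order.trans[OF majorant_diff] add_right_mono majorant_diff) auto
  then show ?thesis
    using assms by (simp add: Qbound_def maj_def dmaj_def)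
qed

lemma majorant_pderiv_Q:
  assumes "y > 0"
  shows "y * majorant (pderiv (Q k)) y \<le> dQbound y (dmaj y) k"
proof -
  have "majorant (pderiv (Q k)) y \<le> majorant (smult (of_nat (k - 1)) (pderiv (P (k - 1)))) y
      + majorant (pderiv (P k)) y + majorant (pderiv (pderiv (P (k - 1)))) y"
    unfolding Q_def pderiv_diff pderiv_smult using assms
    by (intro order.trans[OF majorant_diff] add_right_mono majorant_diff) auto
  then have "y * majorant (pderiv (Q k)) y \<le> real (k - 1) * dmaj y (k - 1) + dmaj y k
      + y * majorant (pderiv (pderiv (P (k - 1)))) y"
    using assms by (auto simp: dmaj_def algebra_simps dest: mult_left_mono[of _ _ y])
  also have "\<dots> \<le> dQbound y (dmaj y) k"
    using majorant_second_pderiv_P[OF assms, of "k - 1"] by (simp add: dQbound_def numeral_2_eq_2)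
  finally show ?thesis .
qed

lemma Qbound_nonneg:
  "y \<ge> 0 \<Longrightarrow> (\<And>j. j \<le> k \<Longrightarrow> a j \<ge> 0) \<Longrightarrow> (\<And>j. j \<le> k \<Longrightarrow> b j \<ge> 0) \<Longrightarrow> Qbound y a b k \<ge> 0"
  by (simp add: Qbound_def)

lemma dQbound_nonneg: "y \<ge> 0 \<Longrightarrow> (\<And>j. j \<le> k \<Longrightarrow> b j \<ge> 0) \<Longrightarrow> dQbound y b k \<ge> 0"
  by (simp add: dQbound_def)

lemma maj_rec:
  assumes "y > 0" and "n \<ge> 1"
  shows "maj y n \<le> Pbound y (maj y) (dmaj y) n"
proof -
  let ?S = "\<Sum>k = 1..n - 1. smult (of_nat k) (Q k) * P (n - k - 1)"
  have "majorant ?S y \<le> (\<Sum>k = 1..n - 1. majorant (smult (of_nat k) (Q k) * P (n - k - 1)) y)"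
    using assms by (intro majorant_sum) auto
  also have "\<dots> \<le> (\<Sum>k = 1..n - 1. real k * Qbound y (maj y) (dmaj y) k * maj y (n - k - 1))"
    using assms
    by (intro sum_mono order.trans[OF majorant_mult])
       (auto simp: maj_def intro!: mult_left_mono mult_right_mono majorant_Q majorant_nonneg)
  finally have sum_le: "majorant ?S y \<le> \<dots>" .
  have "maj y n \<le> real n * maj y (n - 1) + majorant (pderiv (P (n - 1))) y
      + majorant ?S y / real n"
    unfolding maj_def P_rec[OF assms(2)] using assms
    by (intro order.trans[OF majorant_add] add_mono order.trans[OF majorant_diff]) auto
  also have "\<dots> \<le> real n * maj y (n - 1) + majorant (pderiv (P (n - 1))) y
      + (\<Sum>k = 1..n - 1. real k * Qbound y (maj y) (dmaj y) k * maj y (n - k - 1)) / real n"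
    using sum_le by (intro add_left_mono divide_right_mono) auto
  also have "\<dots> = Pbound y (maj y) (dmaj y) n"
    using assms by (simp add: Pbound_def dmaj_def)
  finally show ?thesis .
qed

lemma dmaj_rec:
  assumes "y > 0" and "n \<ge> 1"
  shows "dmaj y n \<le> dPbound y (maj y) (dmaj y) n"
proof -
  let ?S = "\<Sum>k = 1..n - 1. smult (of_nat k) (pderiv (Q k * P (n - k - 1)))"
  have "y * majorant ?S y \<le> y * (\<Sum>k = 1..n - 1. real k * majorant (pderiv (Q k * P (n - k - 1))) y)"
    using assms by (intro mult_left_mono order.trans[OF majorant_sum]) auto
  also have "\<dots> \<le> (\<Sum>k = 1..n - 1. real k * (dQbound y (dmaj y) k * maj y (n - k - 1)
      + Qbound y (maj y) (dmaj y) k * dmaj y (n - k - 1)))"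
    unfolding sum_distrib_left
  proof (intro sum_mono)
    fix k
    have "y * majorant (pderiv (Q k * P (n - k - 1))) y
        \<le> dQbound y (dmaj y) k * maj y (n - k - 1) + Qbound y (maj y) (dmaj y) k * dmaj y (n - k - 1)"
      using assms
      by (intro order.trans[OF majorant_pderiv_mult] add_mono mult_mono majorant_pderiv_Q majorant_Q
          Qbound_nonneg dQbound_nonneg maj_nonneg dmaj_nonneg)
         (auto simp: maj_def dmaj_def majorant_nonneg)
    then show "y * (real k * majorant (pderiv (Q k * P (n - k - 1))) y)
        \<le> real k * (dQbound y (dmaj y) k * maj y (n - k - 1)
          + Qbound y (maj y) (dmaj y) k * dmaj y (n - k - 1))"
      by (auto simp: algebra_simps dest: mult_left_mono[of _ _ "real k"])
  qed
  finally have sum_le: "y * majorant ?S y \<le> \<dots>" .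
  have "pderiv (P n) = smult (of_nat n) (pderiv (P (n - 1))) - pderiv (pderiv (P (n - 1)))
      + smult (1 / of_nat n) ?S"
    unfolding P_rec[OF assms(2)]
    by (simp add: pderiv_add pderiv_diff pderiv_smult higher_pderiv_sum[where n = 1, simplified])
  then have "majorant (pderiv (P n)) y \<le> real n * majorant (pderiv (P (n - 1))) y
      + majorant (pderiv (pderiv (P (n - 1)))) y + majorant ?S y / real n"
    using assms by (auto intro!: order.trans[OF majorant_add] add_mono order.trans[OF majorant_diff])
  then have "dmaj y n \<le> real n * dmaj y (n - 1) + y * majorant (pderiv (pderiv (P (n - 1)))) y
      + y * majorant ?S y / real n"
    unfolding dmaj_def using assms by (auto simp: algebra_simps dest: mult_left_mono[of _ _ y])
  also have "\<dots> \<le> dPbound y (maj y) (dmaj y) n"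
    unfolding dPbound_def using majorant_second_pderiv_P[OF assms(1), of "n - 1"] sum_le
    by (intro add_mono divide_right_mono) (auto simp: numeral_2_eq_2)
  finally show ?thesis .
qed

text \<open>The exponent is \<open>max j 1\<close> because \<open>P 0 = y - 1\<close> has degree one.\<close>
definition profile :: "real \<Rightarrow> (nat \<Rightarrow> real) \<Rightarrow> nat \<Rightarrow> real" where
  "profile y c j = fact j * y ^ max j 1 * c j"

lemma profile_scale: "profile y c j = (y / 2) ^ max j 1 * profile 2 c j"
  by (simp add: profile_def power_divide)

lemma power_scale_le:
  fixes r t :: real
  assumes "r \<ge> 1" "t \<ge> 0" "p \<le> n"
  shows "r ^ p * t \<le> r ^ n * t"
  using assms by (intro mult_right_mono power_increasing) auto

lemma power_scale_div_le:
  fixes r t :: real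
  assumes "r \<ge> 1" "t \<ge> 0" "p \<le> Suc n"
  shows "r ^ p * t / (2 * r) \<le> r ^ n * (t / 2)"
proof -
  have "r ^ p * t \<le> r * r ^ n * t"
    using power_scale_le[OF assms] by simp
  then show ?thesis
    using assms by (simp add: field_simps)
qed

lemma Qbound_scale:
  assumes "y \<ge> 2" "k \<ge> 1" "\<And>j. a j \<ge> 0" "\<And>j. b j \<ge> 0"
  shows "Qbound y (profile y a) (profile y b) k \<le> (y / 2) ^ k * Qbound 2 (profile 2 a) (profile 2 b) k"
proof -
  define r where "r = y / 2"
  have r: "r \<ge> 1" "y = 2 * r"
    using assms by (auto simp: r_def)
  have ps: "profile y c j = r ^ max j 1 * profile 2 c j" for c j
    unfolding r_def by (rule profile_scale)
  have "Qbound y (profile y a) (profile y b) k = real (k - 1) * (r ^ max (k - 1) 1 * profile 2 a (k - 1))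
      + r ^ k * profile 2 a k + r ^ max (k - 1) 1 * profile 2 b (k - 1) / (2 * r)"
    unfolding Qbound_def ps using assms by (simp add: r(2) max_absorb1)
  also have "\<dots> \<le> r ^ k * (real (k - 1) * profile 2 a (k - 1)) + r ^ k * profile 2 a k
      + r ^ k * (profile 2 b (k - 1) / 2)"
  proof (intro add_mono order_refl)
    show "real (k - 1) * (r ^ max (k - 1) 1 * profile 2 a (k - 1)) \<le> r ^ k * (real (k - 1) * profile 2 a (k - 1))"
      using assms r power_scale_le[of r "real (k - 1) * profile 2 a (k - 1)" "max (k - 1) 1" k]
      by (simp add: profile_def mult.left_commute)
    show "r ^ max (k - 1) 1 * profile 2 b (k - 1) / (2 * r) \<le> r ^ k * (profile 2 b (k - 1) / 2)"
      using assms r by (intro power_scale_div_le) (auto simp: profile_def)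
  qed
  also have "\<dots> = r ^ k * Qbound 2 (profile 2 a) (profile 2 b) k"
    by (simp add: Qbound_def distrib_left)
  finally show ?thesis
    by (simp add: r_def)
qed

lemma dQbound_scale:
  assumes "y \<ge> 2" "k \<ge> 1" "\<And>j. b j \<ge> 0"
  shows "dQbound y (profile y b) k \<le> (y / 2) ^ k * dQbound 2 (profile 2 b) k"
proof -
  define r where "r = y / 2"
  have r: "r \<ge> 1" "y = 2 * r"
    using assms by (auto simp: r_def)
  have ps: "profile y c j = r ^ max j 1 * profile 2 c j" for c j
    unfolding r_def by (rule profile_scale)
  have "dQbound y (profile y b) k = real (k - 1) * (r ^ max (k - 1) 1 * profile 2 b (k - 1))
      + r ^ k * profile 2 b k + r ^ max (k - 1) 1 * (real (k - 2) * profile 2 b (k - 1)) / (2 * r)"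
    unfolding dQbound_def ps using assms by (simp add: r(2) max_absorb1 mult.left_commute)
  also have "\<dots> \<le> r ^ k * (real (k - 1) * profile 2 b (k - 1)) + r ^ k * profile 2 b k
      + r ^ k * (real (k - 2) * profile 2 b (k - 1) / 2)"
  proof (intro add_mono order_refl)
    show "real (k - 1) * (r ^ max (k - 1) 1 * profile 2 b (k - 1)) \<le> r ^ k * (real (k - 1) * profile 2 b (k - 1))"
      using assms r power_scale_le[of r "real (k - 1) * profile 2 b (k - 1)" "max (k - 1) 1" k]
      by (simp add: profile_def mult.left_commute)
    show "r ^ max (k - 1) 1 * (real (k - 2) * profile 2 b (k - 1)) / (2 * r)
        \<le> r ^ k * (real (k - 2) * profile 2 b (k - 1) / 2)"
      using assms r by (intro power_scale_div_le) (auto simp: profile_def)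
  qed
  also have "\<dots> = r ^ k * dQbound 2 (profile 2 b) k"
    by (simp add: dQbound_def distrib_left)
  finally show ?thesis
    by (simp add: r_def)
qed

lemma scaled_product_le:
  fixes r :: real
  assumes "r \<ge> 1" "0 \<le> x'" "x \<le> r ^ k * x'" "y = r ^ l * y'" "0 \<le> y'" "k + l \<le> n"
  shows "x * y \<le> r ^ n * (x' * y')"
proof -
  have "x * y \<le> (r ^ k * x') * (r ^ l * y')"
    unfolding assms(4) using assms by (intro mult_right_mono) auto
  also have "\<dots> = r ^ (k + l) * (x' * y')"
    by (simp add: power_add mult_ac)
  also have "\<dots> \<le> r ^ n * (x' * y')"
    using assms by (intro power_scale_le) auto
  finally show ?thesis .
qed

lemma profile_nonneg: "y \<ge> 0 \<Longrightarrow> c j \<ge> 0 \<Longrightarrow> profile y c j \<ge> 0"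
  by (simp add: profile_def)

lemma Pbound_summand_scale:
  assumes "y \<ge> 2" "k \<in> {1..n - 1}" "\<And>j. a j \<ge> 0" "\<And>j. b j \<ge> 0"
  shows "real k * Qbound y (profile y a) (profile y b) k * profile y a (n - k - 1)
    \<le> (y / 2) ^ n * (real k * Qbound 2 (profile 2 a) (profile 2 b) k * profile 2 a (n - k - 1))"
proof -
  have "real k * Qbound y (profile y a) (profile y b) k
      \<le> (y / 2) ^ k * (real k * Qbound 2 (profile 2 a) (profile 2 b) k)"
    using mult_left_mono[OF Qbound_scale[OF assms(1) _ assms(3,4), of k], of "real k"] assms(2)
    by (simp add: mult.left_commute)
  then show ?thesis
    using assms
    by (intro scaled_product_le[OF _ _ _ profile_scale])
       (auto intro!: mult_nonneg_nonneg Qbound_nonneg profile_nonneg)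
qed

lemma dPbound_summand_scale:
  assumes "y \<ge> 2" "k \<in> {1..n - 1}" "\<And>j. a j \<ge> 0" "\<And>j. b j \<ge> 0"
  shows "real k * (dQbound y (profile y b) k * profile y a (n - k - 1)
      + Qbound y (profile y a) (profile y b) k * profile y b (n - k - 1))
    \<le> (y / 2) ^ n * (real k * (dQbound 2 (profile 2 b) k * profile 2 a (n - k - 1)
      + Qbound 2 (profile 2 a) (profile 2 b) k * profile 2 b (n - k - 1)))"
proof -
  have "dQbound y (profile y b) k * profile y a (n - k - 1)
      \<le> (y / 2) ^ n * (dQbound 2 (profile 2 b) k * profile 2 a (n - k - 1))"
    using assms dQbound_scale[of y k b]
    by (intro scaled_product_le[OF _ _ _ profile_scale]) (auto intro!: dQbound_nonneg profile_nonneg)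
  moreover have "Qbound y (profile y a) (profile y b) k * profile y b (n - k - 1)
      \<le> (y / 2) ^ n * (Qbound 2 (profile 2 a) (profile 2 b) k * profile 2 b (n - k - 1))"
    using assms Qbound_scale[of y k a b]
    by (intro scaled_product_le[OF _ _ _ profile_scale]) (auto intro!: Qbound_nonneg profile_nonneg)
  ultimately have "real k * (dQbound y (profile y b) k * profile y a (n - k - 1)
      + Qbound y (profile y a) (profile y b) k * profile y b (n - k - 1))
    \<le> real k * ((y / 2) ^ n * (dQbound 2 (profile 2 b) k * profile 2 a (n - k - 1))
      + (y / 2) ^ n * (Qbound 2 (profile 2 a) (profile 2 b) k * profile 2 b (n - k - 1)))"
    by (intro mult_left_mono add_mono) auto
  then show ?thesis
    by (simp add: algebra_simps)
qed

lemma Pbound_scale: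
  assumes "y \<ge> 2" "n \<ge> 1" "\<And>j. a j \<ge> 0" "\<And>j. b j \<ge> 0"
  shows "Pbound y (profile y a) (profile y b) n \<le> (y / 2) ^ n * Pbound 2 (profile 2 a) (profile 2 b) n"
proof -
  define r where "r = y / 2"
  have r: "r \<ge> 1" "y = 2 * r"
    using assms by (auto simp: r_def)
  have ps: "profile y c j = r ^ max j 1 * profile 2 c j" for c j
    unfolding r_def by (rule profile_scale)
  have "real n * profile y a (n - 1) \<le> r ^ n * (real n * profile 2 a (n - 1))"
    unfolding ps using r assms power_scale_le[of r "real n * profile 2 a (n - 1)" "max (n - 1) 1" n]
    by (simp add: profile_nonneg mult.left_commute)
  moreover have "profile y b (n - 1) / y \<le> r ^ n * (profile 2 b (n - 1) / 2)"
    unfolding ps using r assms by (subst r(2), intro power_scale_div_le profile_nonneg) auto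
  moreover have "(\<Sum>k = 1..n - 1. real k * Qbound y (profile y a) (profile y b) k * profile y a (n - k - 1))
      \<le> r ^ n * (\<Sum>k = 1..n - 1. real k * Qbound 2 (profile 2 a) (profile 2 b) k * profile 2 a (n - k - 1))"
    unfolding sum_distrib_left r_def using assms by (intro sum_mono Pbound_summand_scale) auto
  ultimately have "Pbound y (profile y a) (profile y b) n \<le> r ^ n * (real n * profile 2 a (n - 1))
      + r ^ n * (profile 2 b (n - 1) / 2)
      + r ^ n * (\<Sum>k = 1..n - 1. real k * Qbound 2 (profile 2 a) (profile 2 b) k * profile 2 a (n - k - 1))
        / real n"
    unfolding Pbound_def by (intro add_mono divide_right_mono) auto
  then show ?thesis
    by (simp add: Pbound_def r_def distrib_left)
qed

lemma dPbound_scale: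
  assumes "y \<ge> 2" "n \<ge> 1" "\<And>j. a j \<ge> 0" "\<And>j. b j \<ge> 0"
  shows "dPbound y (profile y a) (profile y b) n \<le> (y / 2) ^ n * dPbound 2 (profile 2 a) (profile 2 b) n"
proof -
  define r where "r = y / 2"
  have r: "r \<ge> 1" "y = 2 * r"
    using assms by (auto simp: r_def)
  have ps: "profile y c j = r ^ max j 1 * profile 2 c j" for c j
    unfolding r_def by (rule profile_scale)
  have "real n * profile y b (n - 1) \<le> r ^ n * (real n * profile 2 b (n - 1))"
    unfolding ps using r assms power_scale_le[of r "real n * profile 2 b (n - 1)" "max (n - 1) 1" n]
    by (simp add: profile_nonneg mult.left_commute)
  moreover have "real (n - 2) * profile y b (n - 1) / y \<le> r ^ n * (real (n - 2) * profile 2 b (n - 1) / 2)"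
  proof -
    have "real (n - 2) * profile y b (n - 1) / y
        = r ^ max (n - 1) 1 * (real (n - 2) * profile 2 b (n - 1)) / (2 * r)"
      unfolding ps by (simp add: r(2) mult.left_commute)
    also have "\<dots> \<le> r ^ n * (real (n - 2) * profile 2 b (n - 1) / 2)"
      using r assms by (intro power_scale_div_le mult_nonneg_nonneg profile_nonneg) auto
    finally show ?thesis .
  qed
  moreover have "(\<Sum>k = 1..n - 1. real k * (dQbound y (profile y b) k * profile y a (n - k - 1)
        + Qbound y (profile y a) (profile y b) k * profile y b (n - k - 1)))
      \<le> r ^ n * (\<Sum>k = 1..n - 1. real k * (dQbound 2 (profile 2 b) k * profile 2 a (n - k - 1)
        + Qbound 2 (profile 2 a) (profile 2 b) k * profile 2 b (n - k - 1)))"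
    unfolding sum_distrib_left r_def using assms by (intro sum_mono dPbound_summand_scale) auto
  ultimately have "dPbound y (profile y a) (profile y b) n \<le> r ^ n * (real n * profile 2 b (n - 1))
      + r ^ n * (real (n - 2) * profile 2 b (n - 1) / 2)
      + r ^ n * (\<Sum>k = 1..n - 1. real k * (dQbound 2 (profile 2 b) k * profile 2 a (n - k - 1)
        + Qbound 2 (profile 2 a) (profile 2 b) k * profile 2 b (n - k - 1))) / real n"
    unfolding dPbound_def by (intro add_mono divide_right_mono) auto
  then show ?thesis
    by (simp add: dPbound_def r_def distrib_left)
qed

lemma Qbound_mono:
  assumes "y > 0" "\<And>j. j \<le> k \<Longrightarrow> a j \<le> a' j" "\<And>j. j \<le> k \<Longrightarrow> b j \<le> b' j"
  shows "Qbound y a b k \<le> Qbound y a' b' k"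
  unfolding Qbound_def using assms
  by (intro add_mono mult_left_mono divide_right_mono) auto

lemma dQbound_mono:
  assumes "y > 0" "\<And>j. j \<le> k \<Longrightarrow> b j \<le> b' j"
  shows "dQbound y b k \<le> dQbound y b' k"
  unfolding dQbound_def using assms
  by (intro add_mono mult_left_mono divide_right_mono) auto

lemma Pbound_mono:
  assumes "y > 0" "n \<ge> 1"
    and "\<And>j. j < n \<Longrightarrow> 0 \<le> a j" "\<And>j. j < n \<Longrightarrow> a j \<le> a' j"
    and "\<And>j. j < n \<Longrightarrow> 0 \<le> b j" "\<And>j. j < n \<Longrightarrow> b j \<le> b' j"
  shows "Pbound y a b n \<le> Pbound y a' b' n"
proof -
  have "0 \<le> a' j" "0 \<le> b' j" if "j < n" for j
    using assms(3-6)[OF that] by linarith+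
  then show ?thesis
    unfolding Pbound_def using assms
    by (intro add_mono mult_left_mono divide_right_mono sum_mono mult_mono Qbound_mono mult_nonneg_nonneg
        Qbound_nonneg) auto
qed

lemma dPbound_mono:
  assumes "y > 0" "n \<ge> 1"
    and "\<And>j. j < n \<Longrightarrow> 0 \<le> a j" "\<And>j. j < n \<Longrightarrow> a j \<le> a' j"
    and "\<And>j. j < n \<Longrightarrow> 0 \<le> b j" "\<And>j. j < n \<Longrightarrow> b j \<le> b' j"
  shows "dPbound y a b n \<le> dPbound y a' b' n"
proof -
  have "0 \<le> a' j" "0 \<le> b' j" if "j < n" for j
    using assms(3-6)[OF that] by linarith+
  then show ?thesis
    unfolding dPbound_def using assms
    by (intro add_mono mult_left_mono divide_right_mono sum_mono mult_mono Qbound_mono Qbound_nonneg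
        dQbound_mono dQbound_nonneg) auto
qed

lemma maj_0: "maj y 0 = 1 + y"
  by (simp add: maj_def P_0 majorant_pCons)

lemma dmaj_0: "dmaj y 0 = y"
  by (simp add: dmaj_def P_0 pderiv_pCons majorant_pCons)

lemma profile_scale_le:
  assumes "y \<ge> 2" "n \<ge> 1" "c \<le> profile 2 a n"
  shows "(y / 2) ^ n * c \<le> profile y a n"
  using assms profile_scale[of y a n] by (simp add: max_absorb1 mult_left_mono)

lemma maj_dmaj_0_le_profile:
  assumes "y \<ge> 2" "a 0 \<ge> 3 / 2" "b 0 \<ge> 1"
  shows "maj y 0 \<le> profile y a 0 \<and> dmaj y 0 \<le> profile y b 0"
proof -
  have "y * (3 / 2) \<le> y * a 0" "y * 1 \<le> y * b 0"
    using assms by (intro mult_left_mono; simp)+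
  moreover have "profile y a 0 = y * a 0" "profile y b 0 = y * b 0"
    by (simp_all add: profile_def)
  ultimately show ?thesis
    unfolding maj_0 dmaj_0 using assms by linarith
qed

lemma maj_le_profile:
  assumes "y \<ge> 2" and "\<And>j. a j \<ge> 0" "\<And>j. b j \<ge> 0" and "a 0 \<ge> 3 / 2" "b 0 \<ge> 1"
    and cert: "\<And>n. n \<ge> 1 \<Longrightarrow> Pbound 2 (profile 2 a) (profile 2 b) n \<le> profile 2 a n"
      "\<And>n. n \<ge> 1 \<Longrightarrow> dPbound 2 (profile 2 a) (profile 2 b) n \<le> profile 2 b n"
  shows "maj y n \<le> profile y a n \<and> dmaj y n \<le> profile y b n"
proof (induction n rule: less_induct)
  case (less n)
  have y: "y > 0"
    using assms by simp
  show ?case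
  proof (cases "n = 0")
    case True
    then show ?thesis
      using assms by (simp add: maj_dmaj_0_le_profile)
  next
    case False
    then have n: "n \<ge> 1"
      by simp
    have "maj y n \<le> Pbound y (maj y) (dmaj y) n"
      using y n by (rule maj_rec)
    also have "\<dots> \<le> Pbound y (profile y a) (profile y b) n"
      using y n less by (intro Pbound_mono maj_nonneg dmaj_nonneg) auto
    also have "\<dots> \<le> (y / 2) ^ n * Pbound 2 (profile 2 a) (profile 2 b) n"
      using assms n by (intro Pbound_scale) auto
    also have "\<dots> \<le> profile y a n"
      using assms(1) n cert(1)[OF n] by (rule profile_scale_le)
    finally have "maj y n \<le> profile y a n" .
    have "dmaj y n \<le> dPbound y (maj y) (dmaj y) n"
      using y n by (rule dmaj_rec)
    also have "\<dots> \<le> dPbound y (profile y a) (profile y b) n"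
      using y n less by (intro dPbound_mono maj_nonneg dmaj_nonneg) auto
    also have "\<dots> \<le> (y / 2) ^ n * dPbound 2 (profile 2 a) (profile 2 b) n"
      using assms n by (intro dPbound_scale) auto
    also have "\<dots> \<le> profile y b n"
      using assms(1) n cert(2)[OF n] by (rule profile_scale_le)
    finally show ?thesis
      using \<open>maj y n \<le> profile y a n\<close> by simp
  qed
qed

lemma choose_two_le_choose:
  assumes "2 \<le> k" "k + 2 \<le> m"
  shows "m choose 2 \<le> m choose k"
proof (cases "2 * k \<le> m")
  case True
  then show ?thesis
    using assms by (intro binomial_mono) auto
next
  case False
  then have "m choose (m - 2) \<le> m choose k"
    using assms by (intro binomial_antimono) auto
  then show ?thesis
    using assms by (simp add: binomial_symmetric[of 2 m])
qed

lemma fact_mult_fact_le: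
  assumes "2 \<le> k" "k + 2 \<le> m"
  shows "fact k * fact (m - k) \<le> (2 :: real) * fact (m - 2)"
proof -
  have "fact k * fact (m - k) * (m choose 2) \<le> fact k * fact (m - k) * (m choose k)"
    using choose_two_le_choose[OF assms] by simp
  also have "\<dots> = 2 * fact (m - 2) * (m choose 2)"
    using assms binomial_fact_lemma[of k m] binomial_fact_lemma[of 2 m] by (simp add: fact_2)
  finally have "fact k * fact (m - k) \<le> (2 * fact (m - 2) :: nat)"
    using assms by (simp add: zero_less_binomial)
  then have "real (fact k * fact (m - k)) \<le> real (2 * fact (m - 2))"
    by (simp only: of_nat_le_iff)
  then show ?thesis
    by (simp add: of_nat_fact)
qed

lemma sum_mult_fact_mult_fact_le:
  assumes "m \<ge> 4"
  shows "(\<Sum>k = 1..m - 1. real k * fact k * fact (m - k)) \<le> 4 * (fact m :: real)"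
proof -
  have split: "{1..m - 1} = insert 1 (insert (m - 1) {2..m - 2})"
    using assms by auto
  have fm: "fact m = real m * fact (m - 1)" "fact (m - 1) = real (m - 1) * (fact (m - 2) :: real)"
    using assms fact_reduce[of m, where 'a = real] fact_reduce[of "m - 1", where 'a = real]
    by (simp_all add: numeral_2_eq_2)
  have "real k * fact k * fact (m - k) \<le> 2 * fact (m - 1)" if "k \<in> {2..m - 2}" for k
  proof -
    have "real k * (fact k * fact (m - k)) \<le> real (m - 1) * (2 * fact (m - 2))"
      using that assms by (intro mult_mono fact_mult_fact_le) auto
    then show ?thesis
      unfolding fm(2) by (simp add: mult.assoc mult.left_commute)
  qed
  then have "(\<Sum>k = 2..m - 2. real k * fact k * fact (m - k)) \<le> (\<Sum>k = 2..m - 2. 2 * fact (m - 1))"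
    by (rule sum_mono)
  also have "\<dots> = real (m - 3) * (2 * fact (m - 1))"
    using assms by (simp add: numeral_3_eq_3)
  also have "\<dots> \<le> real m * (2 * fact (m - 1))"
    by (intro mult_right_mono) auto
  finally have middle: "(\<Sum>k = 2..m - 2. real k * fact k * fact (m - k)) \<le> 2 * fact m"
    unfolding fm(1) by (simp add: mult.left_commute)
  have ends: "fact (m - 1) + real (m - 1) * fact (m - 1) = (fact m :: real)"
    using assms unfolding fm(1) by (simp add: algebra_simps of_nat_diff)
  have "(\<Sum>k = 1..m - 1. real k * fact k * fact (m - k))
      = fact (m - 1) + (real (m - 1) * fact (m - 1) + (\<Sum>k = 2..m - 2. real k * fact k * fact (m - k)))"
  proof -
    have "m - 1 \<notin> {2..m - 2}" "1 \<notin> insert (m - 1) {2..m - 2}" "m - (m - 1) = 1"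
      using assms by auto
    then show ?thesis
      unfolding split by simp
  qed
  then show ?thesis
    using middle ends fact_ge_zero[of m, where 'a = real] by linarith
qed

lemma profile_le: "c j \<le> C \<Longrightarrow> profile 2 c j \<le> C * 2 ^ max j 1 * fact j"
  by (simp add: profile_def mult_left_mono mult.commute mult.left_commute)

lemma Qbound_profile_le:
  assumes "k \<ge> 1" "\<And>j. a j \<le> 5 / 2" "\<And>j. b j \<le> 5"
  shows "Qbound 2 (profile 2 a) (profile 2 b) k \<le> 5 * 2 ^ k * fact k"
proof -
  define F :: real where "F = fact (k - 1)"
  have fact_k: "fact k = real k * F"
    unfolding F_def using assms fact_reduce[of k] by simp
  have pow: "(2 :: real) ^ max (k - 1) 1 \<le> 2 ^ k" "max k 1 = k"
    using assms by (auto intro: power_increasing)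
  have "real (k - 1) * profile 2 a (k - 1) \<le> real (k - 1) * (5 / 2 * 2 ^ k * F)"
    using profile_le[of a "k - 1", OF assms(2)] pow unfolding F_def
    by (intro mult_left_mono) (auto elim!: order.trans intro!: mult_right_mono)
  moreover have "profile 2 a k \<le> 5 / 2 * 2 ^ k * fact k"
    using profile_le[of a k, OF assms(2)] pow by simp
  moreover have "profile 2 b (k - 1) / 2 \<le> 5 / 2 * 2 ^ k * F"
    using profile_le[of b "k - 1", OF assms(3)] pow unfolding F_def
    by (auto elim!: order.trans intro!: mult_right_mono)
  moreover have "real (k - 1) * (5 / 2 * 2 ^ k * F) + 5 / 2 * 2 ^ k * fact k + 5 / 2 * 2 ^ k * F
      = 5 * 2 ^ k * (fact k :: real)"
    using assms unfolding fact_k by (simp add: field_simps of_nat_diff)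
  ultimately show ?thesis
    unfolding Qbound_def by linarith
qed

lemma two_power_pred: "n \<ge> 1 \<Longrightarrow> (2 :: real) ^ n = 2 * 2 ^ (n - 1)"
  by (cases n) simp_all

lemma dQbound_profile_le:
  assumes "k \<ge> 1" "\<And>j. b j \<le> 5"
  shows "dQbound 2 (profile 2 b) k \<le> 35 / 4 * 2 ^ k * fact k"
proof -
  define F :: real where "F = fact (k - 1)"
  have fact_k: "fact k = real k * F"
    unfolding F_def using assms fact_reduce[of k] by simp
  have two_k: "(2 :: real) ^ k = 2 * 2 ^ (k - 1)"
    using assms(1) by (rule two_power_pred)
  have prev: "real i * profile 2 b (k - 1) \<le> real i * (5 * 2 ^ (k - 1) * F)" if "i = 0 \<or> k \<ge> 2" for i
  proof (cases "k \<ge> 2")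
    case True
    then have "max (k - 1) 1 = k - 1"
      by simp
    then show ?thesis
      using profile_le[of b "k - 1", OF assms(2)] unfolding F_def by (intro mult_left_mono) auto
  qed (use that in simp)
  have "real (k - 1) * profile 2 b (k - 1) \<le> real (k - 1) * (5 * 2 ^ (k - 1) * F)"
    "real (k - 2) * profile 2 b (k - 1) \<le> real (k - 2) * (5 * 2 ^ (k - 1) * F)"
    using assms by (intro prev; auto)+
  moreover have "profile 2 b k \<le> 5 * 2 ^ k * fact k"
    using profile_le[of b k, OF assms(2)] assms by (simp add: max_absorb1)
  moreover have "real (k - 2) * (5 * 2 ^ (k - 1) * F) \<le> real (k - 1) * (5 * 2 ^ (k - 1) * F)"
    by (intro mult_right_mono) (auto simp: F_def)
  moreover have "real (k - 1) * (5 * 2 ^ (k - 1) * F) + 5 * 2 ^ k * fact k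
      + real (k - 1) * (5 * 2 ^ (k - 1) * F) / 2 = 35 / 4 * 2 ^ k * fact k - 15 / 2 * (2 ^ (k - 1) * F)"
    using assms unfolding fact_k two_k by (simp add: field_simps of_nat_diff)
  moreover have "0 \<le> 2 ^ (k - 1) * F"
    by (simp add: F_def)
  ultimately show ?thesis
    unfolding dQbound_def by linarith
qed

lemma scaled_fact_product_le:
  fixes x y c d :: real
  assumes "0 \<le> x" "x \<le> c * 2 ^ k * fact k" "0 \<le> y" "y \<le> d * 2 ^ m * fact m"
  shows "real k * x * y \<le> c * d * 2 ^ (k + m) * (real k * fact k * fact m)"
proof -
  have "real k * x * y \<le> real k * (c * 2 ^ k * fact k) * (d * 2 ^ m * fact m)"
    using assms by (intro mult_mono mult_left_mono) auto
  then show ?thesis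
    by (simp add: power_add mult_ac)
qed

lemma sum_convolution_le:
  fixes g :: "nat \<Rightarrow> real"
  assumes "n \<ge> 5" "c \<ge> 0" "\<And>k. k \<in> {1..n - 2} \<Longrightarrow> g k \<le> c * (real k * fact k * fact (n - 1 - k))"
  shows "(\<Sum>k = 1..n - 2. g k) \<le> 4 * c * fact (n - 1)"
proof -
  have "(\<Sum>k = 1..n - 2. g k) \<le> c * (\<Sum>k = 1..n - 2. real k * fact k * fact (n - 1 - k))"
    unfolding sum_distrib_left using assms(3) by (rule sum_mono)
  also have "\<dots> \<le> c * (4 * fact (n - 1))"
    using sum_mult_fact_mult_fact_le[of "n - 1"] assms
    by (intro mult_left_mono) (auto simp: numeral_2_eq_2)
  finally show ?thesis
    by simp
qed

lemma sum_split_last: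
  fixes n :: nat
  assumes "n \<ge> 2"
  shows "(\<Sum>k = 1..n - 1. g k) = (\<Sum>k = 1..n - 2. g k) + g (n - 1)"
proof -
  have "{1..n - 1} = insert (n - 1) {1..n - 2}" "n - 1 \<notin> {1..n - 2}"
    using assms by auto
  then show ?thesis
    by (simp add: add.commute)
qed

lemma Pbound_summand_le:
  assumes "k \<in> {1..n - 2}" and a: "\<And>j. 0 \<le> a j" "\<And>j. a j \<le> 5 / 2" and b: "\<And>j. 0 \<le> b j" "\<And>j. b j \<le> 5"
  shows "real k * Qbound 2 (profile 2 a) (profile 2 b) k * profile 2 a (n - k - 1)
    \<le> 25 / 4 * 2 ^ n * (real k * fact k * fact (n - 1 - k))"
proof -
  have eq: "k + (n - k - 1) = n - 1" "n - k - 1 = n - 1 - k" "n \<ge> 1"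
    using assms(1) by auto
  have "real k * Qbound 2 (profile 2 a) (profile 2 b) k * profile 2 a (n - k - 1)
      \<le> 5 * (5 / 2) * 2 ^ (k + (n - k - 1)) * (real k * fact k * fact (n - k - 1))"
    using assms profile_le[of a "n - k - 1", OF a(2)]
    by (intro scaled_fact_product_le Qbound_profile_le Qbound_nonneg profile_nonneg) auto
  then show ?thesis
    using two_power_pred[OF eq(3)] unfolding eq(1) by (simp add: eq(2))
qed

lemma dPbound_summand_le:
  assumes "k \<in> {1..n - 2}" and a: "\<And>j. 0 \<le> a j" "\<And>j. a j \<le> 5 / 2" and b: "\<And>j. 0 \<le> b j" "\<And>j. b j \<le> 5"
  shows "real k * (dQbound 2 (profile 2 b) k * profile 2 a (n - k - 1)
      + Qbound 2 (profile 2 a) (profile 2 b) k * profile 2 b (n - k - 1))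
    \<le> 375 / 16 * 2 ^ n * (real k * fact k * fact (n - 1 - k))"
proof -
  have eq: "k + (n - k - 1) = n - 1" "n - k - 1 = n - 1 - k" "n \<ge> 1"
    using assms(1) by auto
  have "real k * dQbound 2 (profile 2 b) k * profile 2 a (n - k - 1)
      \<le> 35 / 4 * (5 / 2) * 2 ^ (k + (n - k - 1)) * (real k * fact k * fact (n - k - 1))"
    using assms profile_le[of a "n - k - 1", OF a(2)]
    by (intro scaled_fact_product_le dQbound_profile_le dQbound_nonneg profile_nonneg) auto
  moreover have "real k * Qbound 2 (profile 2 a) (profile 2 b) k * profile 2 b (n - k - 1)
      \<le> 5 * 5 * 2 ^ (k + (n - k - 1)) * (real k * fact k * fact (n - k - 1))"
    using assms profile_le[of b "n - k - 1", OF b(2)]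
    by (intro scaled_fact_product_le Qbound_profile_le Qbound_nonneg profile_nonneg) auto
  ultimately show ?thesis
    using two_power_pred[OF eq(3)] unfolding eq(1) by (simp add: eq(2) algebra_simps)
qed

text \<open>With \<open>X = 2\<^sup>n (n - 1)!\<close> the leading terms of \<open>Pbound\<close> (\<open>dPbound\<close>) are at most \<open>5/4 \<cdot> n X\<close>
  (\<open>15/4 \<cdot> n X\<close>) against the target \<open>5/2 \<cdot> n X\<close> (\<open>5 n X\<close>), while the convolution, divided by \<open>n\<close>,
  is \<open>O(X)\<close>.\<close>
lemma Pbound_tail:
  assumes "n \<ge> 20" and a: "\<And>j. 0 \<le> a j" "\<And>j. a j \<le> 5 / 2" "a 0 \<le> 3 / 2"
    and b: "\<And>j. 0 \<le> b j" "\<And>j. b j \<le> 5"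
  shows "Pbound 2 (profile 2 a) (profile 2 b) n \<le> 5 / 2 * 2 ^ n * fact n"
proof -
  define X :: real where "X = 2 ^ n * fact (n - 1)"
  have X: "0 \<le> X" "20 * X \<le> real n * X" "5 / 2 * 2 ^ n * fact n = 5 / 2 * (real n * X)"
    using assms fact_reduce[of n, where 'a = real] by (auto simp: X_def intro: mult_right_mono)
  have half: "2 ^ (n - 1) * fact (n - 1) = X / 2"
    using assms two_power_pred[of n] by (simp add: X_def)
  let ?g = "\<lambda>k. real k * Qbound 2 (profile 2 a) (profile 2 b) k * profile 2 a (n - k - 1)"
  have middle: "(\<Sum>k = 1..n - 2. ?g k) \<le> 25 * X"
    using sum_convolution_le[of n "25 / 4 * 2 ^ n" ?g] Pbound_summand_le[OF _ a(1,2) b] assms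
    by (simp add: X_def)
  have "?g (n - 1) \<le> real (n - 1) * (5 * 2 ^ (n - 1) * fact (n - 1)) * 3"
    using assms a profile_le[of a 0 "3 / 2"]
    by (intro mult_mono mult_left_mono Qbound_profile_le Qbound_nonneg profile_nonneg) auto
  also have "\<dots> = 15 * real (n - 1) * (2 ^ (n - 1) * fact (n - 1))"
    by (simp add: mult_ac)
  also have "\<dots> = 15 / 2 * (real n * X) - 15 / 2 * X"
    unfolding half using assms by (simp add: field_simps of_nat_diff)
  finally have "(\<Sum>k = 1..n - 1. ?g k) \<le> 9 * (real n * X)"
    using sum_split_last[of n ?g] assms middle X by linarith
  then have tail: "(\<Sum>k = 1..n - 1. ?g k) / real n \<le> 9 * X"
    using assms by (simp add: divide_le_eq mult_ac)
  have "real n * profile 2 a (n - 1) \<le> real n * (5 / 2 * (X / 2))"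
    using assms profile_le[of a "n - 1", OF a(2)] unfolding half[symmetric]
    by (intro mult_left_mono) (auto simp: max_absorb1 mult.assoc)
  moreover have "profile 2 b (n - 1) / 2 \<le> 5 * (X / 2) / 2"
    using assms profile_le[of b "n - 1", OF b(2)] unfolding half[symmetric]
    by (intro divide_right_mono) (auto simp: max_absorb1 mult.assoc)
  ultimately show ?thesis
    unfolding Pbound_def X(3) using tail X(1,2) by (simp add: algebra_simps)
qed

lemma dPbound_tail:
  assumes "n \<ge> 20" and a: "\<And>j. 0 \<le> a j" "\<And>j. a j \<le> 5 / 2" "a 0 \<le> 3 / 2"
    and b: "\<And>j. 0 \<le> b j" "\<And>j. b j \<le> 5" "b 0 \<le> 1"
  shows "dPbound 2 (profile 2 a) (profile 2 b) n \<le> 5 * 2 ^ n * fact n"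
proof -
  define X :: real where "X = 2 ^ n * fact (n - 1)"
  have X: "0 \<le> X" "20 * X \<le> real n * X" "5 * 2 ^ n * fact n = 5 * (real n * X)"
    using assms fact_reduce[of n, where 'a = real] by (auto simp: X_def intro: mult_right_mono)
  have half: "2 ^ (n - 1) * fact (n - 1) = X / 2"
    using assms two_power_pred[of n] by (simp add: X_def)
  let ?g = "\<lambda>k. real k * (dQbound 2 (profile 2 b) k * profile 2 a (n - k - 1)
    + Qbound 2 (profile 2 a) (profile 2 b) k * profile 2 b (n - k - 1))"
  have middle: "(\<Sum>k = 1..n - 2. ?g k) \<le> 375 / 4 * X"
    using sum_convolution_le[of n "375 / 16 * 2 ^ n" ?g] dPbound_summand_le[OF _ a(1,2) b(1,2)] assms
    by (simp add: X_def)
  have "?g (n - 1) \<le> real (n - 1) * (35 / 4 * 2 ^ (n - 1) * fact (n - 1) * 3 + 5 * 2 ^ (n - 1) * fact (n - 1) * 2)"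
    using assms a b profile_le[of a 0 "3 / 2"] profile_le[of b 0 1]
    by (intro mult_left_mono add_mono mult_mono dQbound_profile_le Qbound_profile_le dQbound_nonneg
        Qbound_nonneg profile_nonneg) auto
  also have "\<dots> = 145 / 4 * real (n - 1) * (2 ^ (n - 1) * fact (n - 1))"
    by (simp add: algebra_simps)
  also have "\<dots> = 145 / 8 * (real n * X) - 145 / 8 * X"
    unfolding half using assms by (simp add: field_simps of_nat_diff)
  finally have "(\<Sum>k = 1..n - 1. ?g k) \<le> 22 * (real n * X)"
    using sum_split_last[of n ?g] assms middle X by linarith
  then have tail: "(\<Sum>k = 1..n - 1. ?g k) / real n \<le> 22 * X"
    using assms by (simp add: divide_le_eq mult_ac)
  have "real n * profile 2 b (n - 1) \<le> real n * (5 * (X / 2))"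
    using assms profile_le[of b "n - 1", OF b(2)] unfolding half[symmetric]
    by (intro mult_left_mono) (auto simp: max_absorb1 mult.assoc)
  moreover have "real (n - 2) * profile 2 b (n - 1) / 2 \<le> real n * (5 * (X / 2)) / 2"
    using assms profile_le[of b "n - 1", OF b(2)] unfolding half[symmetric]
    by (intro divide_right_mono mult_mono) (auto simp: max_absorb1 mult.assoc profile_nonneg b)
  ultimately show ?thesis
    unfolding dPbound_def X(3) using tail X(1,2) by (simp add: algebra_simps)
qed

text \<open>A certificate for \<open>maj_le_profile\<close>, found numerically for indices below \<open>20\<close>; beyond them the
  constants of the tail estimate take over.\<close>

definition certA_table :: "real list" where
  "certA_table = [3/2, 2, 207/100, 11/5, 113/50, 221/100, 207/100, 187/100, 41/25, 7/5, 117/100,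
      97/100, 79/100, 16/25, 13/25, 21/50, 17/50, 27/100, 11/50, 9/50]"

definition certB_table :: "real list" where
  "certB_table = [1, 1, 3/2, 219/100, 73/25, 18/5, 104/25, 457/100, 481/100, 489/100, 483/100,
      233/50, 441/100, 41/10, 94/25, 341/100, 153/50, 68/25, 12/5, 21/10]"

definition certA :: "nat \<Rightarrow> real" where
  "certA j = (if j < length certA_table then certA_table ! j else 5 / 2)"

definition certB :: "nat \<Rightarrow> real" where
  "certB j = (if j < length certB_table then certB_table ! j else 5)"

lemma certificate_small:
  "\<forall>n \<in> {1..<20}. Pbound 2 (profile 2 certA) (profile 2 certB) n \<le> profile 2 certA n
    \<and> dPbound 2 (profile 2 certA) (profile 2 certB) n \<le> profile 2 certB n"
  unfolding Pbound_def dPbound_def Qbound_def dQbound_def profile_def certA_def certB_def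
    certA_table_def certB_table_def atLeastAtMost_upt atLeastLessThan_upt sum_set_upt_conv_sum_list_nat
  by (simp add: upt_rec fact_numeral)

lemma certA_bounds: "0 \<le> certA j" "certA j \<le> 5 / 2" "certA 0 = 3 / 2"
proof -
  have "\<forall>x \<in> set certA_table. 0 \<le> x \<and> x \<le> 5 / 2"
    by (simp add: certA_table_def)
  then show "0 \<le> certA j" "certA j \<le> 5 / 2"
    by (auto simp: certA_def dest: nth_mem)
qed (simp add: certA_def certA_table_def)

lemma certB_bounds: "0 \<le> certB j" "certB j \<le> 5" "certB 0 = 1"
proof -
  have "\<forall>x \<in> set certB_table. 0 \<le> x \<and> x \<le> 5"
    by (simp add: certB_table_def)
  then show "0 \<le> certB j" "certB j \<le> 5"
    by (auto simp: certB_def dest: nth_mem)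
qed (simp add: certB_def certB_table_def)

lemma certificate:
  assumes "n \<ge> 1"
  shows "Pbound 2 (profile 2 certA) (profile 2 certB) n \<le> profile 2 certA n
    \<and> dPbound 2 (profile 2 certA) (profile 2 certB) n \<le> profile 2 certB n"
proof (cases "n < 20")
  case True
  then show ?thesis
    using certificate_small assms by auto
next
  case False
  then have "profile 2 certA n = 5 / 2 * 2 ^ n * fact n" "profile 2 certB n = 5 * 2 ^ n * fact n"
    by (simp_all add: profile_def certA_def certB_def certA_table_def certB_table_def max_absorb1)
  moreover have "Pbound 2 (profile 2 certA) (profile 2 certB) n \<le> 5 / 2 * 2 ^ n * fact n"
    using False by (intro Pbound_tail certA_bounds certB_bounds) (auto simp: certA_bounds(3))
  moreover have "dPbound 2 (profile 2 certA) (profile 2 certB) n \<le> 5 * 2 ^ n * fact n"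
    using False by (intro dPbound_tail certA_bounds certB_bounds) (auto simp: certA_bounds(3) certB_bounds(3))
  ultimately show ?thesis
    by simp
qed

theorem theorem5p9:
  shows "(\<forall>(y::real) n::nat. y \<ge> 2 \<and> n \<ge> 1 \<longrightarrow>
            \<bar>poly (P n) y\<bar> \<le> 3 * fact n * y ^ n)
       \<and> (\<forall>y::real. y \<ge> 2 \<longrightarrow> \<bar>poly (P 0) y\<bar> \<le> y)"
proof (intro conjI allI impI)
  fix y :: real and n :: nat
  assume "y \<ge> 2 \<and> n \<ge> 1"
  then have y: "y \<ge> 2" and n: "n \<ge> 1"
    by simp_all
  have "\<bar>poly (P n) y\<bar> \<le> maj y n"
    using y by (simp add: maj_def abs_poly_le_majorant)
  also have "\<dots> \<le> profile y certA n"
    using maj_le_profile[OF y certA_bounds(1) certB_bounds(1) _ _ conjunct1[OF certificate]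
        conjunct2[OF certificate]] certA_bounds(3) certB_bounds(3) by simp
  also have "\<dots> = fact n * y ^ n * certA n"
    using n by (simp add: profile_def max_absorb1)
  also have "\<dots> \<le> 3 * fact n * y ^ n"
    using y certA_bounds(2)[of n] by (simp add: mult_left_mono mult.commute)
  finally show "\<bar>poly (P n) y\<bar> \<le> 3 * fact n * y ^ n" .
next
  fix y :: real
  assume "y \<ge> 2"
  then show "\<bar>poly (P 0) y\<bar> \<le> y"
    by (simp add: P_0)
qed

end
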